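(* Let $K$ be a field, $\Lambda=\mathrm{diag}(a_1,\dots,a_n)$ with $a_i\in K$, $P=(p_{st})\in GL_n(K)$, and $A=P^{-1}\Lambda P$. Then for each $t=1,\dots,n$, $$\Delta_t(A)=\delta(a_1,\dots,a_n)\,\frac{1}{\det P}\prod_{s=1}^n p_{st},$$ and consequently $$\Delta(A)=\delta(a_1,\dots,a_n)^n\,\frac{1}{(\det P)^n}\prod_{s=1}^n\prod_{t=1}^n p_{st}.$$
   Context: For $A\in M_n(K)$ and $t\in\{1,\dots,n\}$, $M_t(A)$ is the $n\times n$ matrix whose $j$-th column is the $t$-th column of $A^{j-1}$ ($j=1,\dots,n$, $A^0=I$); $\Delta_t(A)=\det M_t(A)$ and $\Delta(A)=\prod_{t=1}^n\Delta_t(A)$. $\delta(x_1,\dots,x_n)=\prod_{s<t}(x_t-x_s)$. *)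

theory Defs
  imports "Jordan_Normal_Form.Determinant"
begin

text \<open>Indices are 0-based: rows/columns 0..n-1 correspond to 1..n in the paper.\<close>

definition krylov_mat :: "nat \<Rightarrow> 'a :: comm_ring_1 mat \<Rightarrow> nat \<Rightarrow> 'a mat" where
  "krylov_mat n A t = Matrix.mat n n (\<lambda>(i,j). (A ^\<^sub>m j) $$ (i,t))"

definition Delta_t :: "nat \<Rightarrow> 'a :: comm_ring_1 mat \<Rightarrow> nat \<Rightarrow> 'a" where
  "Delta_t n A t = det (krylov_mat n A t)"

definition Delta :: "nat \<Rightarrow> 'a :: comm_ring_1 mat \<Rightarrow> 'a" where
  "Delta n A = (\<Prod>t<n. Delta_t n A t)"

definition vandermonde_delta :: "nat \<Rightarrow> (nat \<Rightarrow> 'a :: comm_ring_1) \<Rightarrow> 'a" where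
  "vandermonde_delta n a = (\<Prod>t<n. \<Prod>s<t. a t - a s)"

end

theory Submission
  imports Defs
begin

text \<open>Since \<open>A = Q \<Lambda> P\<close> with \<open>Q = P\<inverse>\<close>, we have \<open>A\<^sup>j = Q \<Lambda>\<^sup>j P\<close>, so the \<open>t\<close>-th column of \<open>A\<^sup>j\<close>
  is \<open>Q\<close> applied to the vector \<open>(p\<^sub>s\<^sub>t a\<^sub>s\<^sup>j)\<^sub>s\<close>. Hence \<open>M\<^sub>t(A) = Q \<cdot> diag(p\<^sub>1\<^sub>t, \<dots>, p\<^sub>n\<^sub>t) \<cdot> V\<close>
  with \<open>V = (a\<^sub>s\<^sup>j)\<close> the Vandermonde matrix, and taking determinants gives the formula for
  \<open>\<Delta>\<^sub>t(A)\<close>; multiplying over \<open>t\<close> gives the formula for \<open>\<Delta>(A)\<close>.\<close>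

definition vandermonde_mat :: "nat \<Rightarrow> (nat \<Rightarrow> 'a :: comm_ring_1) \<Rightarrow> 'a mat" where
  "vandermonde_mat n a = Matrix.mat n n (\<lambda>(k,j). a k ^ j)"

lemma vandermonde_mat_carrier [simp]: "vandermonde_mat n a \<in> carrier_mat n n"
  and vandermonde_mat_dim [simp]: "dim_row (vandermonde_mat n a) = n" "dim_col (vandermonde_mat n a) = n"
  by (simp_all add: vandermonde_mat_def)

lemma det_mat_diag: "det (mat_diag n (f :: nat \<Rightarrow> 'a :: comm_ring_1)) = (\<Prod>i<n. f i)"
proof -
  have "det (mat_diag n f) = prod_list (diag_mat (mat_diag n f))"
    by (rule det_upper_triangular[of _ n]) (auto simp: mat_diag_def)
  also have "\<dots> = (\<Prod>i<n. f i)"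
    unfolding prod_list_diag_prod by (simp add: mat_diag_def atLeast0LessThan)
  finally show ?thesis .
qed

lemma det_first_row_zero_but_first:
  fixes A :: "'a :: comm_ring_1 mat"
  assumes A: "A \<in> carrier_mat (Suc n) (Suc n)" and zero: "\<And>j. 0 < j \<Longrightarrow> j \<le> n \<Longrightarrow> A $$ (0,j) = 0"
  shows "det A = A $$ (0,0) * det (mat_delete A 0 0)"
proof -
  have "det A = (\<Sum>j<Suc n. A $$ (0,j) * cofactor A 0 j)"
    by (rule laplace_expansion_row[OF A]) simp
  also have "\<dots> = A $$ (0,0) * cofactor A 0 0"
    using zero by (subst sum.lessThan_Suc_shift) simp
  finally show ?thesis by (simp add: cofactor_def)
qed

lemma vandermonde_delta_Suc:
  "vandermonde_delta (Suc n) (a :: nat \<Rightarrow> 'a :: comm_ring_1)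
   = (\<Prod>i<n. a (Suc i) - a 0) * vandermonde_delta n (\<lambda>i. a (Suc i))"
  unfolding vandermonde_delta_def
  by (simp add: prod.lessThan_Suc_shift prod.distrib del: prod.lessThan_Suc)

lemma vandermonde_mat_column_reduction:
  fixes a :: "nat \<Rightarrow> 'a :: comm_ring_1"
  shows "vandermonde_mat (Suc n) a
           * Matrix.mat (Suc n) (Suc n) (\<lambda>(i,j). if i = j then 1 else if Suc i = j then - a 0 else 0)
         = Matrix.mat (Suc n) (Suc n) (\<lambda>(k,j). if j = 0 then 1 else a k ^ j - a 0 * a k ^ (j - 1))"
  (is "_ * ?E = ?W")
proof (rule eq_matI)
  fix k j assume "k < dim_row ?W" "j < dim_col ?W"
  then have kj: "k < Suc n" "j < Suc n" by auto
  have "(vandermonde_mat (Suc n) a * ?E) $$ (k,j)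
        = (\<Sum>i<Suc n. (if i = j then a k ^ i else 0) + (if Suc i = j then - a 0 * a k ^ i else 0))"
    using kj by (auto simp: vandermonde_mat_def scalar_prod_def atLeast0LessThan intro!: sum.cong)
  also have "\<dots> = ?W $$ (k,j)"
    using kj by (cases j) (auto simp: sum.distrib)
  finally show "(vandermonde_mat (Suc n) a * ?E) $$ (k,j) = ?W $$ (k,j)" .
qed (auto simp: vandermonde_mat_def)

text \<open>Induction step: subtracting \<open>a\<^sub>0\<close> times each column from the next clears the first row
  except its leading \<open>1\<close>, and row \<open>k\<close> of what remains is \<open>(a\<^sub>k - a\<^sub>0)\<close> times a smaller Vandermonde row.\<close>

lemma det_vandermonde_mat:
  "det (vandermonde_mat n (a :: nat \<Rightarrow> 'a :: comm_ring_1)) = vandermonde_delta n a"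
proof (induction n arbitrary: a)
  case 0
  then show ?case by (simp add: vandermonde_mat_def vandermonde_delta_def)
next
  case (Suc n)
  define E :: "'a mat" where
    "E = Matrix.mat (Suc n) (Suc n) (\<lambda>(i,j). if i = j then 1 else if Suc i = j then - a 0 else 0)"
  define W where
    "W = Matrix.mat (Suc n) (Suc n) (\<lambda>(k,j). if j = 0 then 1 else a k ^ j - a 0 * a k ^ (j - 1))"
  have E: "E \<in> carrier_mat (Suc n) (Suc n)" and W: "W \<in> carrier_mat (Suc n) (Suc n)"
    by (auto simp: E_def W_def)
  have "det E = prod_list (diag_mat E)"
    by (rule det_upper_triangular[OF _ E]) (auto simp: E_def)
  then have det_E: "det E = 1"
    unfolding prod_list_diag_prod by (simp add: E_def)
  have W_minor: "mat_delete W 0 0 = mat_diag n (\<lambda>k. a (Suc k) - a 0) * vandermonde_mat n (\<lambda>k. a (Suc k))"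
    by (subst mat_diag_mult_left[of _ n n])
      (auto simp: mat_delete_def W_def vandermonde_mat_def algebra_simps intro!: eq_matI)
  have "det W = det (vandermonde_mat (Suc n) a) * det E"
    unfolding W_def E_def vandermonde_mat_column_reduction[symmetric]
    by (rule det_mult[OF vandermonde_mat_carrier E[unfolded E_def]])
  then have "det (vandermonde_mat (Suc n) a) = det W"
    by (simp add: det_E)
  also have "\<dots> = det (mat_delete W 0 0)"
    by (subst det_first_row_zero_but_first[OF W]) (auto simp: W_def simp flip: power_Suc)
  also have "\<dots> = (\<Prod>k<n. a (Suc k) - a 0) * vandermonde_delta n (\<lambda>k. a (Suc k))"
    unfolding W_minor by (simp add: det_mult[of _ n] det_mat_diag Suc.IH)
  finally show ?case by (simp add: vandermonde_delta_Suc)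
qed

lemma pow_mat_diag: "mat_diag n (a :: nat \<Rightarrow> 'a :: comm_ring_1) ^\<^sub>m j = mat_diag n (\<lambda>k. a k ^ j)"
  by (induction j) (simp_all add: mult.commute carrier_matD[OF mat_diag_dim])

lemma pow_mat_conjugate:
  fixes X :: "'a :: comm_ring_1 mat"
  assumes "X \<in> carrier_mat n n" "P \<in> carrier_mat n n" "Q \<in> carrier_mat n n"
    and "Q * P = 1\<^sub>m n" "P * Q = 1\<^sub>m n"
  shows "(Q * X * P) ^\<^sub>m j = Q * X ^\<^sub>m j * P"
  using assms by (intro similar_mat_wit_pow_id) (auto simp: similar_mat_wit_def Let_def)

lemma krylov_mat_conjugate_diag:
  fixes a :: "nat \<Rightarrow> 'a :: comm_ring_1"
  assumes P: "P \<in> carrier_mat n n" and Q: "Q \<in> carrier_mat n n"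
    and "Q * P = 1\<^sub>m n" "P * Q = 1\<^sub>m n" and t: "t < n"
  shows "krylov_mat n (Q * mat_diag n a * P) t
         = Q * (mat_diag n (\<lambda>k. P $$ (k,t)) * vandermonde_mat n a)"
proof (rule eq_matI)
  fix i j assume "i < dim_row (Q * (mat_diag n (\<lambda>k. P $$ (k,t)) * vandermonde_mat n a))"
    "j < dim_col (Q * (mat_diag n (\<lambda>k. P $$ (k,t)) * vandermonde_mat n a))"
  then have ij: "i < n" "j < n" using Q by auto
  have "(Q * mat_diag n a * P) ^\<^sub>m j = Q * mat_diag n (\<lambda>k. a k ^ j) * P"
    by (simp add: pow_mat_conjugate[OF mat_diag_dim assms(1-4)] pow_mat_diag)
  moreover have "mat_diag n (\<lambda>k. P $$ (k,t)) * vandermonde_mat n a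
                 = Matrix.mat n n (\<lambda>(k,j). P $$ (k,t) * a k ^ j)"
    by (subst mat_diag_mult_left[OF vandermonde_mat_carrier]) (auto simp: vandermonde_mat_def)
  ultimately show "krylov_mat n (Q * mat_diag n a * P) t $$ (i,j)
             = (Q * (mat_diag n (\<lambda>k. P $$ (k,t)) * vandermonde_mat n a)) $$ (i,j)"
    using ij t P Q
    by (simp add: krylov_mat_def mat_diag_mult_right[OF Q] scalar_prod_def algebra_simps)
qed (use Q in \<open>auto simp: krylov_mat_def\<close>)

lemma Delta_t_conjugate_diag:
  fixes a :: "nat \<Rightarrow> 'a :: comm_ring_1"
  assumes P: "P \<in> carrier_mat n n" and Q: "Q \<in> carrier_mat n n"
    and "Q * P = 1\<^sub>m n" "P * Q = 1\<^sub>m n" and "t < n"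
  shows "Delta_t n (Q * mat_diag n a * P) t = det Q * (\<Prod>s<n. P $$ (s,t)) * vandermonde_delta n a"
proof -
  have "Delta_t n (Q * mat_diag n a * P) t
        = det (Q * (mat_diag n (\<lambda>k. P $$ (k,t)) * vandermonde_mat n a))"
    by (simp add: Delta_t_def krylov_mat_conjugate_diag[OF assms])
  also have "\<dots> = det Q * (det (mat_diag n (\<lambda>k. P $$ (k,t))) * det (vandermonde_mat n a))"
    by (simp add: det_mult[OF Q mult_carrier_mat[OF mat_diag_dim vandermonde_mat_carrier]]
        det_mult[OF mat_diag_dim vandermonde_mat_carrier])
  finally show ?thesis
    by (simp add: det_mat_diag det_vandermonde_mat mult.assoc)
qed

lemma det_left_inverse:
  fixes P Q :: "'a :: field mat"
  assumes "P \<in> carrier_mat n n" "Q \<in> carrier_mat n n" "Q * P = 1\<^sub>m n"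
  shows "det Q = 1 / det P"
proof -
  have "det Q * det P = 1"
    using det_mult[OF assms(2,1)] assms(3) by simp
  moreover from this have "det P \<noteq> 0"
    by auto
  ultimately show ?thesis
    by (simp add: eq_divide_eq)
qed

theorem mainTheorem4:
  fixes a :: "nat \<Rightarrow> 'a :: field" and P Q :: "'a mat" and n :: nat
  assumes "P \<in> carrier_mat n n" and "Q \<in> carrier_mat n n"
    and "Q * P = 1\<^sub>m n" and "P * Q = 1\<^sub>m n"
  shows "(\<forall>t<n. Delta_t n (Q * mat_diag n a * P) t
            = vandermonde_delta n a * (1 / det P) * (\<Prod>s<n. P $$ (s,t)))
       \<and> Delta n (Q * mat_diag n a * P)
            = vandermonde_delta n a ^ n * (1 / det P ^ n) * (\<Prod>s<n. \<Prod>t<n. P $$ (s,t))"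
proof -
  have Delta_t: "Delta_t n (Q * mat_diag n a * P) t
                   = vandermonde_delta n a * (1 / det P) * (\<Prod>s<n. P $$ (s,t))" if "t < n" for t
    using Delta_t_conjugate_diag[OF assms that] det_left_inverse[OF assms(1-3)]
    by (simp add: ac_simps)
  have "Delta n (Q * mat_diag n a * P)
        = (\<Prod>t<n. vandermonde_delta n a * (1 / det P) * (\<Prod>s<n. P $$ (s,t)))"
    unfolding Delta_def by (rule prod.cong) (simp_all add: Delta_t)
  also have "\<dots> = vandermonde_delta n a ^ n * (1 / det P ^ n) * (\<Prod>t<n. \<Prod>s<n. P $$ (s,t))"
    by (simp only: prod.distrib prod_constant power_one_over card_lessThan)
  also have "(\<Prod>t<n. \<Prod>s<n. P $$ (s,t)) = (\<Prod>s<n. \<Prod>t<n. P $$ (s,t))"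
    by (rule prod.swap)
  finally show ?thesis
    using Delta_t by simp
qed

end
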